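(* Let $n\ge 1$, $\mu\in\mathbb{R}$, $\alpha>0$, and let $\lambda_1,\dots,\lambda_n>0$ and $\lambda^*_1,\dots,\lambda^*_n>0$. Let $X_1,\dots,X_n$ be independent random variables with $X_i\sim \mathrm{Fr\acute{e}}(\mu,\lambda_i,\alpha)$, and let $X^*_1,\dots,X^*_n$ be independent random variables with $X^*_i\sim \mathrm{Fr\acute{e}}(\mu,\lambda^*_i,\alpha)$, $i=1,\dots,n$. Let $f:(0,\infty)\to\mathbb{R}$ be strictly monotone with differentiable inverse $f^{-1}$, and put $k(a)=(f^{-1})'(a)\,\big(f^{-1}(a)\big)^{\alpha-1}$. Write $\boldsymbol{u}=(f(\lambda_1),\dots,f(\lambda_n))$ and $\boldsymbol{u}^*=(f(\lambda^*_1),\dots,f(\lambda^*_n))$. Suppose first that $f$ is strictly decreasing. Then: (i) if $k$ is increasing and $\sum_{i=1}^{j}u^*_{(i)}\ge \sum_{i=1}^{j}u_{(i)}$ for all $j=1,\dots,n$, then $X_{n:n}\ge_{\rm rh}X^*_{n:n}$; (ii) if $k$ is decreasing and $\sum_{i=j}^{n}u_{(i)}\le \sum_{i=j}^{n}u^*_{(i)}$ for all $j=1,\dots,n$, then $X_{n:n}\ge_{\rm rh}X^*_{n:n}$. Suppose instead that $f$ is strictly increasing. Then: (i') if $k$ is decreasing and $\sum_{i=1}^{j}u^*_{(i)}\ge \sum_{i=1}^{j}u_{(i)}$ for all $j=1,\dots,n$, then $X_{n:n}\le_{\rm rh}X^*_{n:n}$; (ii') if $k$ is increasing and $\sum_{i=j}^{n}u_{(i)}\le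 \sum_{i=j}^{n}u^*_{(i)}$ for all $j=1,\dots,n$, then $X_{n:n}\le_{\rm rh}X^*_{n:n}$.
   Context: $X\sim \mathrm{Fr\acute{e}}(\mu,\lambda,\alpha)$ (Fréchet distribution with location $\mu\in\mathbb{R}$, scale $\lambda>0$, shape $\alpha>0$) means $X$ has distribution function $\exp\{-((x-\mu)/\lambda)^{-\alpha}\}$ for $x>\mu$. $X_{n:n}=\max(X_1,\dots,X_n)$. For a vector $\boldsymbol{x}$, $x_{(1)}\le\dots\le x_{(n)}$ denotes its components in increasing order. For random variables $X,Y$ with distribution functions $F,G$ and densities, the reversed hazard rates are $\tilde r_F=F'/F$, $\tilde r_G=G'/G$, and $X\le_{\rm rh}Y$ means $\tilde r_F(x)\le\tilde r_G(x)$ for all $x$. "Increasing" means nondecreasing and "decreasing" means nonincreasing. *)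

theory Defs
  imports "HOL-Probability.Probability"
begin

definition frechet_cdf :: "real \<Rightarrow> real \<Rightarrow> real \<Rightarrow> real \<Rightarrow> real" where
  "frechet_cdf mu lam alpha x = (if x > mu then exp (- (((x - mu) / lam) powr (- alpha))) else 0)"

definition dist_fun :: "'a measure \<Rightarrow> ('a \<Rightarrow> real) \<Rightarrow> real \<Rightarrow> real" where
  "dist_fun M X = cdf (distr M borel X)"

definition rh_le :: "(real \<Rightarrow> real) \<Rightarrow> (real \<Rightarrow> real) \<Rightarrow> bool" where
  "rh_le F G \<longleftrightarrow> (\<forall>x. F differentiable at x) \<and> (\<forall>x. G differentiable at x) \<and>
     (\<forall>x. deriv F x / F x \<le> deriv G x / G x)"

definition rv_rh_le :: "'a measure \<Rightarrow> ('a \<Rightarrow> real) \<Rightarrow> 'b measure \<Rightarrow> ('b \<Rightarrow> real) \<Rightarrow> bool" where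
  "rv_rh_le M X N Y \<longleftrightarrow> rh_le (dist_fun M X) (dist_fun N Y)"

definition max_stat :: "nat \<Rightarrow> (nat \<Rightarrow> 'a \<Rightarrow> real) \<Rightarrow> 'a \<Rightarrow> real" where
  "max_stat n X = (\<lambda>\<omega>. Max ((\<lambda>i. X i \<omega>) ` {1..n}))"

text \<open>i-th smallest component (1-based) of the vector (u 1, ..., u n).\<close>
definition ord_comp :: "nat \<Rightarrow> (nat \<Rightarrow> real) \<Rightarrow> nat \<Rightarrow> real" where
  "ord_comp n u i = sort (map u [1..<n+1]) ! (i - 1)"

end

theory Submission
  imports Defs "HOL-Real_Asymp.Real_Asymp"
begin

text \<open>The maximum of independent Fr\'echet variables with common location \<open>\<mu>\<close> and shape
  \<open>\<alpha>\<close> has distribution function \<open>exp (-c (x - \<mu>) powr -\<alpha>)\<close> with \<open>c = \<Sum>\<^sub>i \<lambda>\<^sub>i powr \<alpha>\<close>.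
  Its reversed hazard rate \<open>c \<alpha> (x - \<mu>) powr (-\<alpha> - 1)\<close> increases with \<open>c\<close>, so the theorem
  amounts to comparing \<open>\<Sum>\<^sub>i \<lambda>\<^sub>i powr \<alpha>\<close> with \<open>\<Sum>\<^sub>i \<lambda>\<^sup>*\<^sub>i powr \<alpha>\<close>.  Now
  \<open>\<lambda>\<^sub>i powr \<alpha> = g (u\<^sub>i)\<close> for \<open>g = (f\<^sup>-\<^sup>1) powr \<alpha>\<close>, whose derivative is \<open>\<alpha> k\<close>; the sign of \<open>k\<close>
  is that of \<open>(f\<^sup>-\<^sup>1)'\<close>.  Hence in each case \<open>g\<close> or \<open>-g\<close> is convex and monotone, and the
  comparison is a Tomi\'c--Weyl majorization inequality, which follows from the tangent-line
  inequality by Abel summation.\<close>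

lemma above_tangent_of_mono_deriv:
  fixes g g' :: "real \<Rightarrow> real"
  assumes I: "connected I" and deriv: "\<forall>t\<in>I. (g has_real_derivative g' t) (at t)"
    and mono: "mono_on I g'" and a: "a \<in> I" and b: "b \<in> I"
  shows "g a - g b \<le> g' a * (a - b)"
proof (cases a b rule: linorder_cases)
  case less
  have "\<And>x. a \<le> x \<Longrightarrow> x \<le> b \<Longrightarrow> DERIV g x :> g' x"
    using deriv connectedD_interval[OF I a b] by blast
  from MVT2[OF less this] obtain z where z: "a < z" "z < b" "g b - g a = (b - a) * g' z"
    by blast
  have "g' a \<le> g' z"
    using mono a connectedD_interval[OF I a b] z by (auto intro: monotone_onD)
  then have "(b - a) * g' a \<le> (b - a) * g' z" using less by (intro mult_left_mono) auto
  then show ?thesis using z(3) by (simp add: algebra_simps)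
next
  case greater
  have "\<And>x. b \<le> x \<Longrightarrow> x \<le> a \<Longrightarrow> DERIV g x :> g' x"
    using deriv connectedD_interval[OF I b a] by blast
  from MVT2[OF greater this] obtain z where z: "b < z" "z < a" "g a - g b = (a - b) * g' z"
    by blast
  have "g' z \<le> g' a"
    using mono a connectedD_interval[OF I b a] z by (auto intro: monotone_onD)
  then have "(a - b) * g' z \<le> (a - b) * g' a" using greater by (intro mult_left_mono) auto
  then show ?thesis using z(3) by (simp add: algebra_simps)
qed simp

lemma sum_mult_nonpos_of_prefix_sums_nonneg:
  fixes c d :: "nat \<Rightarrow> real"
  assumes mono: "mono_on {1..n} c" and last: "n \<ge> 1 \<Longrightarrow> c n \<le> 0"
    and prefix: "\<forall>j\<in>{1..n}. (\<Sum>i=1..j. d i) \<ge> 0"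
  shows "(\<Sum>i=1..n. c i * d i) \<le> 0"
proof (cases "n = 0")
  case False
  have Abel: "(\<Sum>i=1..m. c i * d i) \<le> c m * (\<Sum>i=1..m. d i)" if "1 \<le> m" "m \<le> n" for m
    using that
  proof (induction m rule: dec_induct)
    case (step m)
    have "(\<Sum>i=1..Suc m. c i * d i) \<le> c m * (\<Sum>i=1..m. d i) + c (Suc m) * d (Suc m)"
      using step by simp
    also have "\<dots> \<le> c (Suc m) * (\<Sum>i=1..m. d i) + c (Suc m) * d (Suc m)"
      using monotone_onD[OF mono, of m "Suc m"] prefix step.hyps step.prems
      by (intro add_right_mono mult_right_mono) auto
    also have "\<dots> = c (Suc m) * (\<Sum>i=1..Suc m. d i)"
      by (simp add: algebra_simps)
    finally show ?case .
  qed simp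
  have "(\<Sum>i=1..n. c i * d i) \<le> c n * (\<Sum>i=1..n. d i)"
    using Abel False by simp
  also have "\<dots> \<le> 0"
    using last prefix False by (simp add: mult_nonpos_nonneg)
  finally show ?thesis .
qed simp

lemma sum_mult_nonpos_of_suffix_sums_nonpos:
  fixes c d :: "nat \<Rightarrow> real"
  assumes mono: "mono_on {1..n} c" and first: "n \<ge> 1 \<Longrightarrow> c 1 \<ge> 0"
    and suffix: "\<forall>j\<in>{1..n}. (\<Sum>i=j..n. d i) \<le> 0"
  shows "(\<Sum>i=1..n. c i * d i) \<le> 0"
proof (cases "n = 0")
  case False
  have Abel: "(\<Sum>i=m..n. c i * d i) \<le> c m * (\<Sum>i=m..n. d i)" if "1 \<le> m" "m \<le> n" for m
    using that(2,1)
  proof (induction m rule: inc_induct)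
    case (step m)
    have "(\<Sum>i=m..n. c i * d i) = c m * d m + (\<Sum>i=Suc m..n. c i * d i)"
      using step.hyps by (simp add: sum.atLeast_Suc_atMost)
    also have "\<dots> \<le> c m * d m + c (Suc m) * (\<Sum>i=Suc m..n. d i)"
      using step by simp
    also have "\<dots> \<le> c m * d m + c m * (\<Sum>i=Suc m..n. d i)"
      using monotone_onD[OF mono, of m "Suc m"] suffix step
      by (intro add_left_mono mult_right_mono_neg) auto
    also have "\<dots> = c m * (\<Sum>i=m..n. d i)"
      using step.hyps by (simp add: algebra_simps sum.atLeast_Suc_atMost)
    finally show ?case .
  qed simp
  have "(\<Sum>i=1..n. c i * d i) \<le> c 1 * (\<Sum>i=1..n. d i)"
    using Abel False by simp
  also have "\<dots> \<le> 0"
    using first suffix False by (simp add: mult_nonneg_nonpos)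
  finally show ?thesis .
qed simp

lemma sum_le_of_prefix_majorization:
  fixes g g' :: "real \<Rightarrow> real" and a b :: "nat \<Rightarrow> real"
  assumes I: "connected I" and deriv: "\<forall>t\<in>I. (g has_real_derivative g' t) (at t)"
    and mono: "mono_on I g'" and nonpos: "\<forall>t\<in>I. g' t \<le> 0"
    and a: "\<forall>i\<in>{1..n}. a i \<in> I" and b: "\<forall>i\<in>{1..n}. b i \<in> I"
    and a_sorted: "mono_on {1..n} a"
    and prefix: "\<forall>j\<in>{1..n}. (\<Sum>i=1..j. a i) \<ge> (\<Sum>i=1..j. b i)"
  shows "(\<Sum>i=1..n. g (a i)) \<le> (\<Sum>i=1..n. g (b i))"
proof -
  have "(\<Sum>i=1..n. g (a i) - g (b i)) \<le> (\<Sum>i=1..n. g' (a i) * (a i - b i))"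
    using above_tangent_of_mono_deriv[OF I deriv mono] a b by (intro sum_mono) auto
  also have "\<dots> \<le> 0"
  proof (rule sum_mult_nonpos_of_prefix_sums_nonneg)
    show "mono_on {1..n} (\<lambda>i. g' (a i))"
      using a a_sorted by (auto intro!: monotone_onI monotone_onD[OF mono] dest: monotone_onD)
    show "\<forall>j\<in>{1..n}. 0 \<le> (\<Sum>i=1..j. a i - b i)"
      using prefix by (simp add: sum_subtractf)
  qed (use nonpos a in auto)
  finally show ?thesis by (simp add: sum_subtractf)
qed

lemma sum_le_of_suffix_majorization:
  fixes g g' :: "real \<Rightarrow> real" and a b :: "nat \<Rightarrow> real"
  assumes I: "connected I" and deriv: "\<forall>t\<in>I. (g has_real_derivative g' t) (at t)"
    and mono: "mono_on I g'" and nonneg: "\<forall>t\<in>I. g' t \<ge> 0"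
    and a: "\<forall>i\<in>{1..n}. a i \<in> I" and b: "\<forall>i\<in>{1..n}. b i \<in> I"
    and a_sorted: "mono_on {1..n} a"
    and suffix: "\<forall>j\<in>{1..n}. (\<Sum>i=j..n. a i) \<le> (\<Sum>i=j..n. b i)"
  shows "(\<Sum>i=1..n. g (a i)) \<le> (\<Sum>i=1..n. g (b i))"
proof -
  have "(\<Sum>i=1..n. g (a i) - g (b i)) \<le> (\<Sum>i=1..n. g' (a i) * (a i - b i))"
    using above_tangent_of_mono_deriv[OF I deriv mono] a b by (intro sum_mono) auto
  also have "\<dots> \<le> 0"
  proof (rule sum_mult_nonpos_of_suffix_sums_nonpos)
    show "mono_on {1..n} (\<lambda>i. g' (a i))"
      using a a_sorted by (auto intro!: monotone_onI monotone_onD[OF mono] dest: monotone_onD)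
    show "\<forall>j\<in>{1..n}. (\<Sum>i=j..n. a i - b i) \<le> 0"
      using suffix by (simp add: sum_subtractf)
  qed (use nonneg a in auto)
  finally show ?thesis by (simp add: sum_subtractf)
qed

lemma ord_comp_mono_on: "mono_on {1..n} (ord_comp n u)"
  unfolding ord_comp_def by (intro monotone_onI sorted_nth_mono) auto

lemma ord_comp_in_image: "i \<in> {1..n} \<Longrightarrow> ord_comp n u i \<in> u ` {1..n}"
proof -
  assume "i \<in> {1..n}"
  then have "ord_comp n u i \<in> set (sort (map u [1..<n+1]))"
    unfolding ord_comp_def by (intro nth_mem) auto
  then show ?thesis by auto
qed

lemma sum_ord_comp: "(\<Sum>i=1..n. h (ord_comp n u i)) = (\<Sum>i=1..n. h (u i))"
proof -
  let ?xs = "sort (map u [1..<n+1])"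
  have "(\<Sum>i=1..n. h (ord_comp n u i)) = (\<Sum>i=0..<n. h (?xs ! i))"
    unfolding ord_comp_def
    by (rule sum.reindex_bij_witness[where i="\<lambda>i. i + 1" and j="\<lambda>i. i - 1"]) auto
  also have "\<dots> = sum_list (map h ?xs)"
    by (subst sum_list_sum_nth) simp
  also have "\<dots> = sum_list (map h (map u [1..<n+1]))"
    by (metis mset_map mset_sort sum_mset_sum_list)
  also have "\<dots> = sum (h \<circ> u) {1..<n+1}"
    by (simp only: sum_set_upt_conv_sum_list_nat[symmetric] map_map set_upt)
  also have "{1..<n+1} = {1..n}"
    by auto
  finally show ?thesis by simp
qed

lemma ord_comp_in_image_pos:
  assumes "\<forall>i\<in>{1..n}. lam i > 0" and "i \<in> {1..n}"
  shows "ord_comp n (\<lambda>i. f (lam i)) i \<in> f ` {0<..}"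
  using ord_comp_in_image[OF assms(2), of "\<lambda>i. f (lam i)"] assms(1) by auto

lemma dist_fun_max_stat_indep:
  assumes M: "prob_space M" and n: "n \<ge> 1"
    and indep: "prob_space.indep_vars M (\<lambda>_. borel) X {1..n}"
  shows "dist_fun M (max_stat n X) x = (\<Prod>i\<in>{1..n}. dist_fun M (X i) x)"
proof -
  interpret prob_space M by (rule M)
  have X_meas: "X i \<in> borel_measurable M" if "i \<in> {1..n}" for i
    using indep that unfolding indep_vars_def2 by auto
  have dist_fun_eq: "dist_fun M Y x = prob (Y -` {..x} \<inter> space M)"
    if "Y \<in> borel_measurable M" for Y
    unfolding dist_fun_def cdf_def using that by (simp add: measure_distr)
  have max_meas: "max_stat n X \<in> borel_measurable M"
    unfolding max_stat_def by (rule borel_measurable_Max) (use X_meas in auto)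
  have "max_stat n X -` {..x} \<inter> space M = (\<Inter>i\<in>{1..n}. X i -` {..x} \<inter> space M)"
    using n by (auto simp: max_stat_def)
  then have "dist_fun M (max_stat n X) x = prob (\<Inter>i\<in>{1..n}. X i -` {..x} \<inter> space M)"
    using dist_fun_eq[OF max_meas] by simp
  also have "\<dots> = (\<Prod>i\<in>{1..n}. prob (X i -` {..x} \<inter> space M))"
    using indep n unfolding indep_vars_def2
    by (intro indep_setsD[where F="\<lambda>i. {X i -` A \<inter> space M | A. A \<in> sets borel}"])
       (auto intro!: exI[where x="{..x}"])
  also have "\<dots> = (\<Prod>i\<in>{1..n}. dist_fun M (X i) x)"
    using dist_fun_eq X_meas by simp
  finally show ?thesis .
qed

definition frechet_rate_cdf :: "real \<Rightarrow> real \<Rightarrow> real \<Rightarrow> real \<Rightarrow> real" where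
  "frechet_rate_cdf mu alpha c x = (if x > mu then exp (- (c * (x - mu) powr (- alpha))) else 0)"

lemma frechet_cdf_eq_rate_cdf:
  assumes "lam > 0"
  shows "frechet_cdf mu lam alpha x = frechet_rate_cdf mu alpha (lam powr alpha) x"
proof -
  have "((x - mu) / lam) powr (- alpha) = lam powr alpha * (x - mu) powr (- alpha)"
    using assms by (simp only: powr_divide) (simp add: powr_minus divide_inverse)
  then show ?thesis
    by (simp add: frechet_cdf_def frechet_rate_cdf_def)
qed

lemma prod_frechet_rate_cdf:
  assumes "A \<noteq> {}" and "finite A"
  shows "(\<Prod>i\<in>A. frechet_rate_cdf mu alpha (c i) x) = frechet_rate_cdf mu alpha (\<Sum>i\<in>A. c i) x"
  using assms
  by (simp add: frechet_rate_cdf_def exp_sum[symmetric] sum_negf sum_distrib_right card_gt_0_iff)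

lemma dist_fun_max_stat_frechet:
  assumes "prob_space M" and n: "n \<ge> 1" and lam: "\<forall>i\<in>{1..n}. lam i > 0"
    and "prob_space.indep_vars M (\<lambda>_. borel) X {1..n}"
    and dist: "\<forall>i\<in>{1..n}. \<forall>x. dist_fun M (X i) x = frechet_cdf mu (lam i) alpha x"
  shows "dist_fun M (max_stat n X) = frechet_rate_cdf mu alpha (\<Sum>i\<in>{1..n}. lam i powr alpha)"
proof
  fix x
  have "dist_fun M (max_stat n X) x = (\<Prod>i\<in>{1..n}. frechet_rate_cdf mu alpha (lam i powr alpha) x)"
    using dist_fun_max_stat_indep[OF assms(1,2,4)] dist lam by (simp add: frechet_cdf_eq_rate_cdf)
  then show "dist_fun M (max_stat n X) x = frechet_rate_cdf mu alpha (\<Sum>i\<in>{1..n}. lam i powr alpha) x"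
    using n by (simp add: prod_frechet_rate_cdf)
qed

lemma frechet_rate_cdf_has_derivative_above:
  assumes "x > mu"
  shows "(frechet_rate_cdf mu alpha c has_real_derivative
           frechet_rate_cdf mu alpha c x * (c * alpha * (x - mu) powr (- alpha - 1))) (at x)"
proof -
  have "((\<lambda>y. exp (- (c * (y - mu) powr (- alpha)))) has_real_derivative
          exp (- (c * (x - mu) powr (- alpha))) * (- (c * (- alpha * (x - mu) powr (- alpha - 1) * 1))))
        (at x)"
    using assms by (auto intro!: derivative_eq_intros)
  then have "(frechet_rate_cdf mu alpha c has_real_derivative
          exp (- (c * (x - mu) powr (- alpha))) * (- (c * (- alpha * (x - mu) powr (- alpha - 1) * 1))))
        (at x)"
    by (rule has_field_derivative_transform_within_open[where S="{mu<..}"])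
       (use assms in \<open>auto simp: frechet_rate_cdf_def\<close>)
  then show ?thesis
    using assms by (simp add: frechet_rate_cdf_def mult.assoc)
qed

lemma frechet_rate_cdf_has_derivative_below:
  assumes "x < mu"
  shows "(frechet_rate_cdf mu alpha c has_real_derivative 0) (at x)"
  by (rule has_field_derivative_transform_within_open[OF DERIV_const, where S="{..<mu}"])
     (use assms in \<open>auto simp: frechet_rate_cdf_def\<close>)

lemma frechet_rate_cdf_has_derivative_at_location:
  assumes c: "c > 0" and alpha: "alpha > 0"
  shows "(frechet_rate_cdf mu alpha c has_real_derivative 0) (at mu)"
proof -
  let ?H = "frechet_rate_cdf mu alpha c"
  have "((\<lambda>t. exp (- (c * t powr (- alpha))) / t) \<longlongrightarrow> 0) (at_right 0)"
    using c alpha by real_asymp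
  then have "((\<lambda>y. (?H y - ?H mu) / (y - mu)) \<longlongrightarrow> 0) (at_right mu)"
    unfolding filterlim_at_right_to_0[of _ _ mu]
    by (rule Lim_transform_eventually)
       (auto simp: eventually_at_filter frechet_rate_cdf_def intro: always_eventually)
  moreover have "((\<lambda>y. (?H y - ?H mu) / (y - mu)) \<longlongrightarrow> 0) (at_left mu)"
    by (rule Lim_transform_eventually[OF tendsto_const])
       (auto simp: eventually_at_filter frechet_rate_cdf_def intro: always_eventually)
  ultimately show ?thesis
    unfolding has_field_derivative_iff by (intro filterlim_split_at)
qed

lemma frechet_rate_cdf_differentiable:
  assumes "c > 0" and "alpha > 0"
  shows "frechet_rate_cdf mu alpha c differentiable at x"
  using frechet_rate_cdf_has_derivative_above[of mu x] frechet_rate_cdf_has_derivative_below[of x mu]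
    frechet_rate_cdf_has_derivative_at_location[OF assms]
  by (cases x mu rule: linorder_cases) (auto simp: real_differentiable_def)

lemma frechet_rate_cdf_reversed_hazard:
  "deriv (frechet_rate_cdf mu alpha c) x / frechet_rate_cdf mu alpha c x =
     (if x > mu then c * alpha * (x - mu) powr (- alpha - 1) else 0)"
proof (cases "x > mu")
  case True
  then have "frechet_rate_cdf mu alpha c x > 0"
    by (simp add: frechet_rate_cdf_def)
  then show ?thesis
    using DERIV_imp_deriv[OF frechet_rate_cdf_has_derivative_above[OF True]] True by simp
qed (simp add: frechet_rate_cdf_def)

lemma rh_le_frechet_rate_cdf:
  assumes c1: "c1 > 0" and le: "c1 \<le> c2" and alpha: "alpha > 0"
  shows "rh_le (frechet_rate_cdf mu alpha c1) (frechet_rate_cdf mu alpha c2)"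
  unfolding rh_le_def frechet_rate_cdf_reversed_hazard
  using frechet_rate_cdf_differentiable[OF c1 alpha] frechet_rate_cdf_differentiable[of c2 alpha]
    c1 le alpha
  by (auto intro: mult_right_mono)

lemma rv_rh_le_max_stat_frechet:
  assumes M: "prob_space M" and N: "prob_space N" and n: "n \<ge> 1" and alpha: "alpha > 0"
    and lam: "\<forall>i\<in>{1..n}. lam i > 0" and lam': "\<forall>i\<in>{1..n}. lam' i > 0"
    and indX: "prob_space.indep_vars M (\<lambda>_. borel) X {1..n}"
    and indX': "prob_space.indep_vars N (\<lambda>_. borel) X' {1..n}"
    and distX: "\<forall>i\<in>{1..n}. \<forall>x. dist_fun M (X i) x = frechet_cdf mu (lam i) alpha x"
    and distX': "\<forall>i\<in>{1..n}. \<forall>x. dist_fun N (X' i) x = frechet_cdf mu (lam' i) alpha x"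
    and le: "(\<Sum>i\<in>{1..n}. lam i powr alpha) \<le> (\<Sum>i\<in>{1..n}. lam' i powr alpha)"
  shows "rv_rh_le M (max_stat n X) N (max_stat n X')"
proof -
  have "lam i powr alpha > 0" if "i \<in> {1..n}" for i
    using bspec[OF lam that] by simp
  then have "(\<Sum>i\<in>{1..n}. lam i powr alpha) > 0"
    using n by (intro sum_pos) auto
  then show ?thesis
    unfolding rv_rh_le_def dist_fun_max_stat_frechet[OF M n lam indX distX]
      dist_fun_max_stat_frechet[OF N n lam' indX' distX']
    using le alpha by (rule rh_le_frechet_rate_cdf)
qed

lemma inverse_deriv_nonneg_if_strict_mono:
  fixes f finv :: "real \<Rightarrow> real"
  assumes inc: "\<forall>x\<in>{0<..}. \<forall>y\<in>{0<..}. x < y \<longrightarrow> f x < f y"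
    and cont: "continuous_on {0<..} f" and finv: "\<forall>x\<in>{0<..}. finv (f x) = x"
    and t: "t \<in> f ` {0<..}" and deriv: "(finv has_real_derivative d) (at t)"
  shows "d \<ge> 0"
proof (rule mono_on_imp_deriv_nonneg[OF _ deriv])
  show "mono_on (f ` {0<..}) finv"
  proof (rule monotone_onI, clarify)
    fix x y :: real assume "x > 0" "y > 0" "f x \<le> f y"
    then have "x \<le> y"
      using inc \<open>x > 0\<close> \<open>y > 0\<close> by (meson greaterThan_iff not_le)
    then show "finv (f x) \<le> finv (f y)"
      using finv \<open>x > 0\<close> \<open>y > 0\<close> by simp
  qed
  obtain l where l: "l > 0" "t = f l"
    using t by auto
  have "{f (l/2)..f (2*l)} \<subseteq> f ` {0<..}"
    using l by (intro connected_contains_Icc connected_continuous_image[OF cont]) auto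
  moreover have "t \<in> interior {f (l/2)..f (2*l)}"
    using inc l by simp
  ultimately show "t \<in> interior (f ` {0<..})"
    by (meson interior_mono subsetD)
qed

lemma inverse_deriv_nonpos_if_strict_antimono:
  fixes f finv :: "real \<Rightarrow> real"
  assumes dec: "\<forall>x\<in>{0<..}. \<forall>y\<in>{0<..}. x < y \<longrightarrow> f x > f y"
    and cont: "continuous_on {0<..} f" and finv: "\<forall>x\<in>{0<..}. finv (f x) = x"
    and t: "t \<in> f ` {0<..}" and deriv: "(finv has_real_derivative d) (at t)"
  shows "d \<le> 0"
proof -
  have "(finv has_real_derivative d) (at (- (- t)))"
    using deriv by simp
  from DERIV_chain2[OF this DERIV_minus[OF DERIV_ident]]
  have deriv_neg: "((\<lambda>s. finv (- s)) has_real_derivative - d) (at (- t))"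
    by simp
  have "- d \<ge> 0"
  proof (rule inverse_deriv_nonneg_if_strict_mono[where f="\<lambda>x. - f x" and t="- t"])
    show "continuous_on {0<..} (\<lambda>x. - f x)"
      using cont by (rule continuous_on_minus)
    show "- t \<in> (\<lambda>x. - f x) ` {0<..}"
      using t by auto
  qed (use dec finv deriv_neg in auto)
  then show ?thesis by simp
qed

context
  fixes f finv finv' :: "real \<Rightarrow> real" and alpha :: real
  assumes alpha: "alpha > 0" and f_cont: "continuous_on {0<..} f"
    and finv: "\<forall>x\<in>{0<..}. finv (f x) = x"
    and finv_deriv: "\<forall>a\<in>f ` {0<..}. (finv has_real_derivative finv' a) (at a)"
begin

lemma connected_image_pos: "connected (f ` {0<..})"
  by (rule connected_continuous_image[OF f_cont]) simp

lemma powr_finv_has_derivative: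
  assumes "t \<in> f ` {0<..}"
  shows "((\<lambda>t. finv t powr alpha) has_real_derivative
           alpha * (finv' t * finv t powr (alpha - 1))) (at t)"
proof -
  have "finv t > 0"
    using assms finv by auto
  with assms finv_deriv
  have "((\<lambda>t. finv t powr alpha) has_real_derivative
           alpha * finv t powr (alpha - of_nat 1) * finv' t) (at t)"
    by (intro DERIV_fun_powr) auto
  then show ?thesis
    by (simp add: mult_ac)
qed

lemma sum_powr_finv_ord_comp:
  assumes "\<forall>i\<in>{1..n}. lam i > 0"
  shows "(\<Sum>i=1..n. finv (ord_comp n (\<lambda>i. f (lam i)) i) powr alpha) = (\<Sum>i\<in>{1..n}. lam i powr alpha)"
proof -
  have "(\<Sum>i=1..n. finv (ord_comp n (\<lambda>i. f (lam i)) i) powr alpha) =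
        (\<Sum>i=1..n. finv (f (lam i)) powr alpha)"
    by (rule sum_ord_comp)
  also have "\<dots> = (\<Sum>i\<in>{1..n}. lam i powr alpha)"
    using assms finv by (intro sum.cong) auto
  finally show ?thesis .
qed

lemma finv_deriv_mult_powr_nonpos:
  assumes "\<forall>x\<in>{0<..}. \<forall>y\<in>{0<..}. x < y \<longrightarrow> f x > f y" and "t \<in> f ` {0<..}"
  shows "finv' t * finv t powr (alpha - 1) \<le> 0"
proof -
  have "finv' t \<le> 0"
    using inverse_deriv_nonpos_if_strict_antimono[OF assms(1) f_cont finv assms(2)] finv_deriv assms(2)
    by blast
  then show ?thesis
    by (simp add: mult_nonpos_nonneg)
qed

lemma finv_deriv_mult_powr_nonneg:
  assumes "\<forall>x\<in>{0<..}. \<forall>y\<in>{0<..}. x < y \<longrightarrow> f x < f y" and "t \<in> f ` {0<..}"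
  shows "finv' t * finv t powr (alpha - 1) \<ge> 0"
proof -
  have "finv' t \<ge> 0"
    using inverse_deriv_nonneg_if_strict_mono[OF assms(1) f_cont finv assms(2)] finv_deriv assms(2)
    by blast
  then show ?thesis
    by simp
qed

lemma sum_powr_le_of_prefix_if_decreasing:
  assumes dec: "\<forall>x\<in>{0<..}. \<forall>y\<in>{0<..}. x < y \<longrightarrow> f x > f y"
    and k: "mono_on (f ` {0<..}) (\<lambda>a. finv' a * finv a powr (alpha - 1))"
    and lam: "\<forall>i\<in>{1..n}. lam i > 0" and lam': "\<forall>i\<in>{1..n}. lam' i > 0"
    and prefix: "\<forall>j\<in>{1..n}. (\<Sum>i=1..j. ord_comp n (\<lambda>i. f (lam' i)) i) \<ge>
                            (\<Sum>i=1..j. ord_comp n (\<lambda>i. f (lam i)) i)"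
  shows "(\<Sum>i\<in>{1..n}. lam' i powr alpha) \<le> (\<Sum>i\<in>{1..n}. lam i powr alpha)"
proof -
  have "(\<Sum>i=1..n. finv (ord_comp n (\<lambda>i. f (lam' i)) i) powr alpha) \<le>
        (\<Sum>i=1..n. finv (ord_comp n (\<lambda>i. f (lam i)) i) powr alpha)"
  proof (rule sum_le_of_prefix_majorization[OF connected_image_pos,
        where g="\<lambda>t. finv t powr alpha" and g'="\<lambda>t. alpha * (finv' t * finv t powr (alpha - 1))"])
    show "mono_on (f ` {0<..}) (\<lambda>t. alpha * (finv' t * finv t powr (alpha - 1)))"
      using k alpha by (auto simp: monotone_on_def intro: mult_left_mono)
    show "\<forall>t\<in>f ` {0<..}. alpha * (finv' t * finv t powr (alpha - 1)) \<le> 0"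
      using finv_deriv_mult_powr_nonpos[OF dec] alpha by (simp add: mult_nonneg_nonpos)
  qed (use powr_finv_has_derivative ord_comp_in_image_pos[where f=f] lam lam' ord_comp_mono_on prefix in auto)
  then show ?thesis
    by (simp only: sum_powr_finv_ord_comp[OF lam] sum_powr_finv_ord_comp[OF lam'])
qed

lemma sum_powr_le_of_suffix_if_decreasing:
  assumes dec: "\<forall>x\<in>{0<..}. \<forall>y\<in>{0<..}. x < y \<longrightarrow> f x > f y"
    and k: "antimono_on (f ` {0<..}) (\<lambda>a. finv' a * finv a powr (alpha - 1))"
    and lam: "\<forall>i\<in>{1..n}. lam i > 0" and lam': "\<forall>i\<in>{1..n}. lam' i > 0"
    and suffix: "\<forall>j\<in>{1..n}. (\<Sum>i=j..n. ord_comp n (\<lambda>i. f (lam i)) i) \<le>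
                            (\<Sum>i=j..n. ord_comp n (\<lambda>i. f (lam' i)) i)"
  shows "(\<Sum>i\<in>{1..n}. lam' i powr alpha) \<le> (\<Sum>i\<in>{1..n}. lam i powr alpha)"
proof -
  have "(\<Sum>i=1..n. - (finv (ord_comp n (\<lambda>i. f (lam i)) i) powr alpha)) \<le>
        (\<Sum>i=1..n. - (finv (ord_comp n (\<lambda>i. f (lam' i)) i) powr alpha))"
  proof (rule sum_le_of_suffix_majorization[OF connected_image_pos,
        where g="\<lambda>t. - (finv t powr alpha)" and g'="\<lambda>t. - (alpha * (finv' t * finv t powr (alpha - 1)))"])
    show "mono_on (f ` {0<..}) (\<lambda>t. - (alpha * (finv' t * finv t powr (alpha - 1))))"
      using k alpha by (auto simp: monotone_on_def intro: mult_left_mono)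
    show "\<forall>t\<in>f ` {0<..}. - (alpha * (finv' t * finv t powr (alpha - 1))) \<ge> 0"
      using finv_deriv_mult_powr_nonpos[OF dec] alpha by (simp add: mult_nonneg_nonpos)
  qed (use powr_finv_has_derivative ord_comp_in_image_pos[where f=f] lam lam' ord_comp_mono_on suffix
       in \<open>auto intro: DERIV_minus\<close>)
  then show ?thesis
    by (simp only: sum_negf sum_powr_finv_ord_comp[OF lam] sum_powr_finv_ord_comp[OF lam'] neg_le_iff_le)
qed

lemma sum_powr_le_of_prefix_if_increasing:
  assumes inc: "\<forall>x\<in>{0<..}. \<forall>y\<in>{0<..}. x < y \<longrightarrow> f x < f y"
    and k: "antimono_on (f ` {0<..}) (\<lambda>a. finv' a * finv a powr (alpha - 1))"
    and lam: "\<forall>i\<in>{1..n}. lam i > 0" and lam': "\<forall>i\<in>{1..n}. lam' i > 0"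
    and prefix: "\<forall>j\<in>{1..n}. (\<Sum>i=1..j. ord_comp n (\<lambda>i. f (lam' i)) i) \<ge>
                            (\<Sum>i=1..j. ord_comp n (\<lambda>i. f (lam i)) i)"
  shows "(\<Sum>i\<in>{1..n}. lam i powr alpha) \<le> (\<Sum>i\<in>{1..n}. lam' i powr alpha)"
proof -
  have "(\<Sum>i=1..n. - (finv (ord_comp n (\<lambda>i. f (lam' i)) i) powr alpha)) \<le>
        (\<Sum>i=1..n. - (finv (ord_comp n (\<lambda>i. f (lam i)) i) powr alpha))"
  proof (rule sum_le_of_prefix_majorization[OF connected_image_pos,
        where g="\<lambda>t. - (finv t powr alpha)" and g'="\<lambda>t. - (alpha * (finv' t * finv t powr (alpha - 1)))"])
    show "mono_on (f ` {0<..}) (\<lambda>t. - (alpha * (finv' t * finv t powr (alpha - 1))))"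
      using k alpha by (auto simp: monotone_on_def intro: mult_left_mono)
    show "\<forall>t\<in>f ` {0<..}. - (alpha * (finv' t * finv t powr (alpha - 1))) \<le> 0"
      using finv_deriv_mult_powr_nonneg[OF inc] alpha by simp
  qed (use powr_finv_has_derivative ord_comp_in_image_pos[where f=f] lam lam' ord_comp_mono_on prefix
       in \<open>auto intro: DERIV_minus\<close>)
  then show ?thesis
    by (simp only: sum_negf sum_powr_finv_ord_comp[OF lam] sum_powr_finv_ord_comp[OF lam'] neg_le_iff_le)
qed

lemma sum_powr_le_of_suffix_if_increasing:
  assumes inc: "\<forall>x\<in>{0<..}. \<forall>y\<in>{0<..}. x < y \<longrightarrow> f x < f y"
    and k: "mono_on (f ` {0<..}) (\<lambda>a. finv' a * finv a powr (alpha - 1))"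
    and lam: "\<forall>i\<in>{1..n}. lam i > 0" and lam': "\<forall>i\<in>{1..n}. lam' i > 0"
    and suffix: "\<forall>j\<in>{1..n}. (\<Sum>i=j..n. ord_comp n (\<lambda>i. f (lam i)) i) \<le>
                            (\<Sum>i=j..n. ord_comp n (\<lambda>i. f (lam' i)) i)"
  shows "(\<Sum>i\<in>{1..n}. lam i powr alpha) \<le> (\<Sum>i\<in>{1..n}. lam' i powr alpha)"
proof -
  have "(\<Sum>i=1..n. finv (ord_comp n (\<lambda>i. f (lam i)) i) powr alpha) \<le>
        (\<Sum>i=1..n. finv (ord_comp n (\<lambda>i. f (lam' i)) i) powr alpha)"
  proof (rule sum_le_of_suffix_majorization[OF connected_image_pos,
        where g="\<lambda>t. finv t powr alpha" and g'="\<lambda>t. alpha * (finv' t * finv t powr (alpha - 1))"])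
    show "mono_on (f ` {0<..}) (\<lambda>t. alpha * (finv' t * finv t powr (alpha - 1)))"
      using k alpha by (auto simp: monotone_on_def intro: mult_left_mono)
    show "\<forall>t\<in>f ` {0<..}. alpha * (finv' t * finv t powr (alpha - 1)) \<ge> 0"
      using finv_deriv_mult_powr_nonneg[OF inc] alpha by simp
  qed (use powr_finv_has_derivative ord_comp_in_image_pos[where f=f] lam lam' ord_comp_mono_on suffix in auto)
  then show ?thesis
    by (simp only: sum_powr_finv_ord_comp[OF lam] sum_powr_finv_ord_comp[OF lam'])
qed

end

theorem mainTheorem1:
  fixes n :: nat and mu alpha :: real
    and lam lam' :: "nat \<Rightarrow> real"
    and M :: "'a measure" and N :: "'b measure"
    and X :: "nat \<Rightarrow> 'a \<Rightarrow> real" and X' :: "nat \<Rightarrow> 'b \<Rightarrow> real"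
    and f finv finv' :: "real \<Rightarrow> real"
  assumes n: "n \<ge> 1" and alpha: "alpha > 0"
    and lam_pos: "\<forall>i\<in>{1..n}. lam i > 0" and lam'_pos: "\<forall>i\<in>{1..n}. lam' i > 0"
    and M: "prob_space M" and N: "prob_space N"
    and indX: "prob_space.indep_vars M (\<lambda>_. borel) X {1..n}"
    and indX': "prob_space.indep_vars N (\<lambda>_. borel) X' {1..n}"
    and distX: "\<forall>i\<in>{1..n}. \<forall>x. dist_fun M (X i) x = frechet_cdf mu (lam i) alpha x"
    and distX': "\<forall>i\<in>{1..n}. \<forall>x. dist_fun N (X' i) x = frechet_cdf mu (lam' i) alpha x"
    and f_mono: "(\<forall>x\<in>{0<..}. \<forall>y\<in>{0<..}. x < y \<longrightarrow> f x < f y) \<or>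
                 (\<forall>x\<in>{0<..}. \<forall>y\<in>{0<..}. x < y \<longrightarrow> f x > f y)"
    and f_cont: "continuous_on {0<..} f"
    and finv: "\<forall>x\<in>{0<..}. finv (f x) = x"
    and finv_deriv: "\<forall>a\<in>f ` {0<..}. (finv has_real_derivative finv' a) (at a)"
  defines "k \<equiv> (\<lambda>a. finv' a * finv a powr (alpha - 1))"
    and "u \<equiv> (\<lambda>i. f (lam i))" and "u' \<equiv> (\<lambda>i. f (lam' i))"
  shows
    "((\<forall>x\<in>{0<..}. \<forall>y\<in>{0<..}. x < y \<longrightarrow> f x > f y) \<longrightarrow>
        ((mono_on (f ` {0<..}) k \<and>
          (\<forall>j\<in>{1..n}. (\<Sum>i=1..j. ord_comp n u' i) \<ge> (\<Sum>i=1..j. ord_comp n u i)))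
           \<longrightarrow> rv_rh_le N (max_stat n X') M (max_stat n X)) \<and>
        ((antimono_on (f ` {0<..}) k \<and>
          (\<forall>j\<in>{1..n}. (\<Sum>i=j..n. ord_comp n u i) \<le> (\<Sum>i=j..n. ord_comp n u' i)))
           \<longrightarrow> rv_rh_le N (max_stat n X') M (max_stat n X))) \<and>
     ((\<forall>x\<in>{0<..}. \<forall>y\<in>{0<..}. x < y \<longrightarrow> f x < f y) \<longrightarrow>
        ((antimono_on (f ` {0<..}) k \<and>
          (\<forall>j\<in>{1..n}. (\<Sum>i=1..j. ord_comp n u' i) \<ge> (\<Sum>i=1..j. ord_comp n u i)))
           \<longrightarrow> rv_rh_le M (max_stat n X) N (max_stat n X')) \<and>
        ((mono_on (f ` {0<..}) k \<and>
          (\<forall>j\<in>{1..n}. (\<Sum>i=j..n. ord_comp n u i) \<le> (\<Sum>i=j..n. ord_comp n u' i)))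
           \<longrightarrow> rv_rh_le M (max_stat n X) N (max_stat n X')))"
proof -
  have X'_le_X: "rv_rh_le N (max_stat n X') M (max_stat n X)"
    if "(\<Sum>i\<in>{1..n}. lam' i powr alpha) \<le> (\<Sum>i\<in>{1..n}. lam i powr alpha)"
    using rv_rh_le_max_stat_frechet[OF N M n alpha lam'_pos lam_pos indX' indX distX' distX that] .
  have X_le_X': "rv_rh_le M (max_stat n X) N (max_stat n X')"
    if "(\<Sum>i\<in>{1..n}. lam i powr alpha) \<le> (\<Sum>i\<in>{1..n}. lam' i powr alpha)"
    using rv_rh_le_max_stat_frechet[OF M N n alpha lam_pos lam'_pos indX indX' distX distX' that] .
  note transform = alpha f_cont finv finv_deriv
  show ?thesis
    unfolding k_def u_def u'_def
    using sum_powr_le_of_prefix_if_decreasing[OF transform _ _ lam_pos lam'_pos]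
      sum_powr_le_of_suffix_if_decreasing[OF transform _ _ lam_pos lam'_pos]
      sum_powr_le_of_prefix_if_increasing[OF transform _ _ lam_pos lam'_pos]
      sum_powr_le_of_suffix_if_increasing[OF transform _ _ lam_pos lam'_pos]
      X'_le_X X_le_X'
    by blast
qed

end
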